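(* Let $q$ be a prime power, $c\in\mathbb{F}_q^*$ and $\delta\in\mathbb{F}_{q^4}$. Then $f(x)=g(x^q+x+\delta)+cx$ is a permutation polynomial of $\mathbb{F}_{q^4}$ if one of the following holds: (i) $g(x)=c_0\left(u(x)^{q^3}+u(x)^{q^2}+u(x)^q+u(x)\right)$, where $u(x)\in\mathbb{F}_{q^4}[x]$ and $c_0\in\mathbb{F}_{q^4}^*$ satisfies $c_0^q+c_0=0$; (ii) $g(x)=c_0x^{i(q^3+q^2+q+1)}$, where $i$ is a positive integer and $c_0\in\mathbb{F}_{q^4}^*$ satisfies $c_0^q+c_0=0$.
   Context: A polynomial is a permutation polynomial of a finite field if it induces a bijection of that field. $\mathbb{F}_q$ is viewed as the subfield of $\mathbb{F}_{q^4}$. *)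

theory Defs
  imports "HOL-Computational_Algebra.Polynomial" "HOL-Computational_Algebra.Primes" "HOL-Library.Cardinality"
begin

definition permutation_poly :: "'a::{field,finite} poly \<Rightarrow> bool" where
  "permutation_poly p \<longleftrightarrow> bij (poly p)"

end

theory Submission
  imports Defs "HOL-Number_Theory.Residues"
begin

text \<open>
  Write \<open>\<sigma> x = x\<^sup>q\<close> and \<open>L x = \<sigma> x + x + \<delta>\<close>. The map \<open>\<sigma>\<close> is additive, commutes with
  multiplication by \<open>c\<close>, and satisfies \<open>\<sigma>\<^sup>4 = id\<close>; hence both \<open>a + \<sigma> a + \<sigma>\<^sup>2 a + \<sigma>\<^sup>3 a\<close> and
  \<open>a\<^bsup>1+q+q\<^sup>2+q\<^sup>3\<^esup>\<close> are \<open>\<sigma>\<close>-fixed, and since \<open>\<sigma> c\<^sub>0 = -c\<^sub>0\<close> every value \<open>v\<close> of \<open>g\<close>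
  satisfies \<open>\<sigma> v = -v\<close>. If \<open>f x = f y\<close> then \<open>c (x - y) = g (L y) - g (L x)\<close>; applying \<open>\<sigma>\<close>
  gives \<open>\<sigma> (x - y) + (x - y) = 0\<close>, i.e. \<open>L x = L y\<close>, and hence \<open>c (x - y) = 0\<close>. So \<open>f\<close> is
  injective, hence bijective on the finite field.
\<close>

hide_const (open) module.smult up_ring.monom

text \<open>The library's \<open>finite_field_power_card_eq_same\<close> needs the class \<open>finite_field\<close>.\<close>

lemma finite_field_power_card:
  fixes x :: "'a::{field,finite}"
  shows "x ^ CARD('a) = x"
proof (cases "x = 0")
  case False
  let ?U = "UNIV - {0 :: 'a}"
  have "bij_betw ((*) x) ?U ?U"
    by (rule bij_betw_byWitness[of _ "\<lambda>y. y / x"]) (use False in auto)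
  then have "(\<Prod>y\<in>?U. y) = (\<Prod>y\<in>?U. x * y)"
    by (rule prod.reindex_bij_betw[symmetric])
  also have "\<dots> = x ^ card ?U * (\<Prod>y\<in>?U. y)"
    by (simp add: prod.distrib)
  finally have "x ^ card ?U = 1"
    by simp
  moreover have "CARD('a) = Suc (card ?U)"
    by (simp add: card_Diff_singleton Suc_diff_1 finite_UNIV_card_ge_0)
  ultimately show ?thesis
    by (metis power_Suc mult_1_right)
qed (simp add: finite_UNIV_card_ge_0)

lemma CHAR_eq_prime_if_card_eq_power:
  fixes p :: nat
  assumes "prime p" and "CARD('a::{field,finite}) = p ^ n"
  shows "CHAR('a) = p"
proof -
  have "CHAR('a) > 0"
    by (rule finite_imp_CHAR_pos) simp
  then have prime_char: "prime CHAR('a)"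
    by (rule prime_CHAR_semidom)
  then have "CHAR('a) dvd p"
    using CHAR_dvd_CARD[where 'a = 'a] assms(2) prime_dvd_power by metis
  with prime_char \<open>prime p\<close> show ?thesis
    by (simp add: primes_dvd_imp_eq)
qed

lemma freshmans_dream_diff:
  fixes a b :: "'a::comm_ring_1"
  assumes "prime CHAR('a)" and "q = CHAR('a) ^ k"
  shows "(a - b) ^ q = a ^ q - b ^ q"
  using freshmans_dream'[OF assms, of "a - b" b] by (simp add: eq_diff_eq)

lemma inj_anti_invariant_comp_plus_scale:
  fixes \<sigma> G :: "'a::idom \<Rightarrow> 'a"
  assumes \<sigma>_diff: "\<And>x y. \<sigma> (x - y) = \<sigma> x - \<sigma> y"
    and \<sigma>_scale: "\<And>x. \<sigma> (c * x) = c * \<sigma> x"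
    and "c \<noteq> 0"
    and G_anti: "\<And>z. \<sigma> (G z) = - G z"
  shows "inj (\<lambda>x. G (\<sigma> x + x + \<delta>) + c * x)"
proof (rule injI)
  fix x y
  define L where "L t = \<sigma> t + t + \<delta>" for t
  assume "G (\<sigma> x + x + \<delta>) + c * x = G (\<sigma> y + y + \<delta>) + c * y"
  then have diff: "c * (x - y) = G (L y) - G (L x)"
    by (simp add: L_def algebra_simps)
  then have "c * \<sigma> (x - y) = \<sigma> (G (L y) - G (L x))"
    by (simp flip: \<sigma>_scale)
  also have "\<dots> = - (c * (x - y))"
    using diff by (simp add: \<sigma>_diff G_anti)
  finally have "c * \<sigma> (x - y) = - (c * (x - y))" .
  then have "\<sigma> (x - y) + (x - y) = 0"
    using \<open>c \<noteq> 0\<close> by (simp add: eq_neg_iff_add_eq_0 flip: distrib_left)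
  then have "L x = L y"
    by (simp add: L_def \<sigma>_diff algebra_simps)
  with diff \<open>c \<noteq> 0\<close> show "x = y"
    by simp
qed

lemma power_trace4_fixed:
  fixes a :: "'a::comm_semiring_1"
  assumes add: "\<And>x y :: 'a. (x + y) ^ q = x ^ q + y ^ q"
    and period: "a ^ (q ^ 4) = a"
  shows "(a ^ q ^ 3 + a ^ q ^ 2 + a ^ q + a) ^ q = a ^ q ^ 3 + a ^ q ^ 2 + a ^ q + a"
proof -
  have "(a ^ q ^ 3) ^ q = a ^ q ^ 4" "(a ^ q ^ 2) ^ q = a ^ q ^ 3" "(a ^ q) ^ q = a ^ q ^ 2"
    by (simp_all add: numeral_eq_Suc power_Suc2 mult_ac flip: power_mult)
  then show ?thesis
    unfolding add period by (simp add: add_ac)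
qed

lemma power_norm4_fixed:
  fixes a :: "'a::comm_monoid_mult"
  assumes period: "a ^ (q ^ 4) = a"
  shows "(a ^ (q ^ 3 + q ^ 2 + q + 1)) ^ q = a ^ (q ^ 3 + q ^ 2 + q + 1)"
proof -
  have "(q ^ 3 + q ^ 2 + q + 1) * q = q ^ 4 + (q ^ 3 + q ^ 2 + q)"
    by (simp add: distrib_right add_ac flip: power_Suc2 power2_eq_square)
  then have "(a ^ (q ^ 3 + q ^ 2 + q + 1)) ^ q = a ^ (q ^ 4 + (q ^ 3 + q ^ 2 + q))"
    by (simp only: flip: power_mult)
  also have "\<dots> = a ^ q ^ 4 * a ^ (q ^ 3 + q ^ 2 + q)"
    by (rule power_add)
  also have "\<dots> = a ^ (q ^ 3 + q ^ 2 + q + 1)"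
    by (simp only: period power_add power_one_right mult.commute)
  finally show ?thesis .
qed

lemma poly_trace4_anti_invariant:
  fixes u :: "'a::comm_ring_1 poly"
  assumes add: "\<And>x y :: 'a. (x + y) ^ q = x ^ q + y ^ q"
    and period: "\<And>x :: 'a. x ^ (q ^ 4) = x"
    and "c0 ^ q + c0 = 0"
  shows "poly (smult c0 (u ^ (q ^ 3) + u ^ (q ^ 2) + u ^ q + u)) z ^ q
       = - poly (smult c0 (u ^ (q ^ 3) + u ^ (q ^ 2) + u ^ q + u)) z"
proof -
  have "c0 ^ q = - c0"
    using \<open>c0 ^ q + c0 = 0\<close> by (simp add: eq_neg_iff_add_eq_0)
  then show ?thesis
    using power_trace4_fixed[OF add period, of "poly u z"]
    by (simp add: poly_power power_mult_distrib)
qed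

lemma poly_monom_norm4_anti_invariant:
  fixes c0 :: "'a::comm_ring_1"
  assumes period: "\<And>x :: 'a. x ^ (q ^ 4) = x"
    and "c0 ^ q + c0 = 0"
  shows "poly (monom c0 (i * (q ^ 3 + q ^ 2 + q + 1))) z ^ q
       = - poly (monom c0 (i * (q ^ 3 + q ^ 2 + q + 1))) z"
proof -
  define w where "w = z ^ (q ^ 3 + q ^ 2 + q + 1)"
  have "poly (monom c0 (i * (q ^ 3 + q ^ 2 + q + 1))) z = c0 * w ^ i"
    unfolding poly_monom w_def power_mult [symmetric] by (simp add: mult.commute)
  moreover have "c0 ^ q = - c0"
    using \<open>c0 ^ q + c0 = 0\<close> by (simp add: eq_neg_iff_add_eq_0)
  moreover have "(w ^ i) ^ q = (w ^ q) ^ i"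
    by (simp add: mult.commute flip: power_mult)
  moreover have "w ^ q = w"
    unfolding w_def by (rule power_norm4_fixed[OF period])
  ultimately show ?thesis
    by (simp add: power_mult_distrib)
qed

theorem proposition6:
  fixes q :: nat and c \<delta> :: "'a::{field,finite}" and g :: "'a poly"
  assumes q_pp: "\<exists>p k. prime p \<and> k > 0 \<and> q = p ^ k"
    and card: "CARD('a) = q ^ 4"
    and c_nz: "c \<noteq> 0" and c_Fq: "c ^ q = c"
    and g_cases:
      "(\<exists>u c0. c0 \<noteq> 0 \<and> c0 ^ q + c0 = 0 \<and>
               g = smult c0 (u ^ (q ^ 3) + u ^ (q ^ 2) + u ^ q + u))
       \<or> (\<exists>i c0. i > 0 \<and> c0 \<noteq> 0 \<and> c0 ^ q + c0 = 0 \<and>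
               g = monom c0 (i * (q ^ 3 + q ^ 2 + q + 1)))"
  shows "permutation_poly (pcompose g (monom 1 q + [:\<delta>, 1:]) + [:0, c:])"
proof -
  obtain p k where "prime p" and q: "q = p ^ k"
    using q_pp by blast
  then have "CHAR('a) = p"
    using card by (intro CHAR_eq_prime_if_card_eq_power) (simp_all flip: power_mult)
  with \<open>prime p\<close> q have add: "(x + y) ^ q = x ^ q + y ^ q"
    and diff: "(x - y) ^ q = x ^ q - y ^ q" for x y :: 'a
    by (simp_all add: freshmans_dream' freshmans_dream_diff)
  have period: "x ^ (q ^ 4) = x" for x :: 'a
    using finite_field_power_card[of x] card by simp
  have anti: "poly g z ^ q = - poly g z" for z
    using g_cases poly_trace4_anti_invariant[OF add period] poly_monom_norm4_anti_invariant[OF period]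
    by blast
  have "poly (pcompose g (monom 1 q + [:\<delta>, 1:]) + [:0, c:])
      = (\<lambda>x. poly g (x ^ q + x + \<delta>) + c * x)"
    by (simp add: poly_pcompose poly_monom algebra_simps fun_eq_iff)
  moreover have "inj (\<lambda>x. poly g (x ^ q + x + \<delta>) + c * x)"
    using diff c_nz anti
    by (intro inj_anti_invariant_comp_plus_scale) (simp_all add: power_mult_distrib c_Fq)
  ultimately show ?thesis
    unfolding permutation_poly_def by (simp add: bij_def finite_UNIV_inj_surj)
qed

end
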